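(* Let $\Delta\ge 1$ and let $N = 2^{\lceil \log_2(2\Delta-1)\rceil}$. A palette is a data structure over the colour set $\{1,\dots,N\}$ consisting of a bit vector $A$ of length $N$ (where $A[c]=1$ means colour $c$ is used and $A[c]=0$ means it is available), an array $C$ of length $N$ storing for each used colour a pointer to the corresponding edge, and a segment tree over $A$ whose leaves store the entries of $A$ and whose internal nodes store the sum of the leaves in their subtree. Given two palettes $P$ and $Q$ such that exactly $a$ colours are used in $P$ and exactly $b$ colours are used in $Q$ (with $a+b+1\le N$), one can find a colour $c\in\{1,\dots,a+b+1\}$ that is available in both $P$ and $Q$ in $O(\log \Delta)$ time (and mark it as used in both palettes within the same time bound).
   Context: Model of computation: standard word-RAM; constant-time access to array entries and to the sums stored at segment-tree nodes. *)

theory Defs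
  imports Complex_Main
begin

text \<open>Palettes over the colour set {1..N}, N = 2^k.
  pA: bit vector (pA c = True iff colour c is used);
  pC: pointer array (edge stored for each used colour);
  pT: segment tree; node i at depth d (0 \<le> d \<le> k, i < 2^d) covers the
      colours i*2^(k-d)+1 .. (i+1)*2^(k-d) and stores the number of used
      colours in that block (sum of its leaves).\<close>

record 'e palette =
  pA :: "nat \<Rightarrow> bool"
  pC :: "nat \<Rightarrow> 'e option"
  pT :: "nat \<Rightarrow> nat \<Rightarrow> nat"

definition pal_k :: "nat \<Rightarrow> nat" where
  "pal_k \<Delta> = nat \<lceil>log 2 (2 * real \<Delta> - 1)\<rceil>"

definition pal_N :: "nat \<Rightarrow> nat" where
  "pal_N \<Delta> = 2 ^ pal_k \<Delta>"

definition valid_palette :: "nat \<Rightarrow> 'e palette \<Rightarrow> bool" where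
  "valid_palette k P \<longleftrightarrow>
     (\<forall>c. pA P c \<longrightarrow> c \<in> {1..2^k}) \<and>
     (\<forall>c. pC P c \<noteq> None \<longleftrightarrow> pA P c) \<and>
     (\<forall>d\<le>k. \<forall>i<2^d. pT P d i = card {c \<in> {i * 2^(k-d) + 1 .. (i+1) * 2^(k-d)}. pA P c})"

definition used_count :: "'e palette \<Rightarrow> nat" where
  "used_count P = card {c. pA P c}"

definition available :: "nat \<Rightarrow> 'e palette \<Rightarrow> nat \<Rightarrow> bool" where
  "available k P c \<longleftrightarrow> c \<in> {1..2^k} \<and> \<not> pA P c"

text \<open>The algorithm, instrumented with a cost counter (number of elementary
  word-RAM steps: node reads, writes). descend r k T1 T2 d i: simultaneous descent
  in both trees from node (d,i), with r levels remaining; returns the 0-based leaf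
  index reached and the cost.\<close>

primrec descend :: "nat \<Rightarrow> nat \<Rightarrow> (nat \<Rightarrow> nat \<Rightarrow> nat) \<Rightarrow> (nat \<Rightarrow> nat \<Rightarrow> nat)
                     \<Rightarrow> nat \<Rightarrow> nat \<Rightarrow> nat \<times> nat" where
  "descend 0 k T1 T2 d i = (i, 0)"
| "descend (Suc r) k T1 T2 d i =
     (let l = 2 * i;
          s = T1 (Suc d) l + T2 (Suc d) l;
          i' = (if s < 2 ^ (k - Suc d) then l else Suc l);
          (j, t) = descend r k T1 T2 (Suc d) i'
      in (j, t + 3))"

primrec inc_path :: "nat \<Rightarrow> nat \<Rightarrow> nat \<Rightarrow> (nat \<Rightarrow> nat \<Rightarrow> nat) \<Rightarrow> (nat \<Rightarrow> nat \<Rightarrow> nat) \<times> nat" where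
  "inc_path k leaf 0 T = (T(0 := (T 0)(0 := T 0 0 + 1)), 1)"
| "inc_path k leaf (Suc d) T =
     (let (T', t) = inc_path k leaf d T;
          i = leaf div 2 ^ (k - Suc d)
      in (T'(Suc d := (T' (Suc d))(i := T' (Suc d) i + 1)), t + 1))"

definition mark_used :: "nat \<Rightarrow> 'e palette \<Rightarrow> nat \<Rightarrow> 'e \<Rightarrow> 'e palette \<times> nat" where
  "mark_used k P c e =
     (let (T', t) = inc_path k (c - 1) k (pT P)
      in (P\<lparr>pA := (pA P)(c := True), pC := (pC P)(c := Some e), pT := T'\<rparr>, t + 2))"

definition find_and_mark :: "nat \<Rightarrow> 'e palette \<Rightarrow> 'e palette \<Rightarrow> 'e
                              \<Rightarrow> nat \<times> 'e palette \<times> 'e palette \<times> nat" where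
  "find_and_mark k P Q e =
     (let (j, t1) = descend k k (pT P) (pT Q) 0 0;
          c = j + 1;
          (P', t2) = mark_used k P c e;
          (Q', t3) = mark_used k Q c e
      in (c, P', Q', t1 + t2 + t3 + 1))"

end

theory Submission
  imports Defs
begin

text \<open>Write \<open>U\<^sub>A(x)\<close> for the number of colours in \<open>1..x\<close> used in palette \<open>A\<close>, and call the
  block \<open>x+1..x+m\<close> deficient for \<open>P, Q\<close> if it contains fewer than \<open>m\<close> used colours of \<open>P\<close> and
  \<open>Q\<close> together while \<open>x \<le> U\<^sub>P(x) + U\<^sub>Q(x)\<close>. The whole range \<open>1..2^k\<close> is deficient since
  \<open>a + b < 2^k\<close>. If a deficient block is halved, either the left half has fewer than half
  its size used, and is deficient, or it has at least that many, and then the right half is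
  deficient; this is exactly the test made by the descent, whose two sums are read off the
  segment trees. A deficient leaf \<open>x+1\<close> is free in both palettes, and
  \<open>x \<le> U\<^sub>P(x) + U\<^sub>Q(x) \<le> a + b\<close>. The descent and the two root-to-leaf updates each take
  \<open>O(k) = O(log \<Delta>)\<close> steps.\<close>

definition prefix_count :: "(nat \<Rightarrow> bool) \<Rightarrow> nat \<Rightarrow> nat" where
  "prefix_count A x = card {c \<in> {1..x}. A c}"

definition is_count_tree :: "nat \<Rightarrow> (nat \<Rightarrow> bool) \<Rightarrow> (nat \<Rightarrow> nat \<Rightarrow> nat) \<Rightarrow> bool" where
  "is_count_tree k A T \<longleftrightarrow>
     (\<forall>d\<le>k. \<forall>i<2^d. T d i = card {c \<in> {i * 2^(k-d) + 1 .. (i+1) * 2^(k-d)}. A c})"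

definition deficient_block :: "(nat \<Rightarrow> bool) \<Rightarrow> (nat \<Rightarrow> bool) \<Rightarrow> nat \<Rightarrow> nat \<Rightarrow> bool" where
  "deficient_block A B x m \<longleftrightarrow>
     prefix_count A (x + m) + prefix_count B (x + m) < prefix_count A x + prefix_count B x + m \<and>
     x \<le> prefix_count A x + prefix_count B x"

lemma valid_palette_iff:
  "valid_palette k P \<longleftrightarrow>
     (\<forall>c. pA P c \<longrightarrow> c \<in> {1..2^k}) \<and> (\<forall>c. pC P c \<noteq> None \<longleftrightarrow> pA P c) \<and>
     is_count_tree k (pA P) (pT P)"
  unfolding valid_palette_def is_count_tree_def ..

lemma prefix_count_0 [simp]: "prefix_count A 0 = 0"
  by (simp add: prefix_count_def)

lemma prefix_count_add:
  "prefix_count A (x + y) = prefix_count A x + card {c \<in> {x+1..x+y}. A c}"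
proof -
  have "{c \<in> {1..x+y}. A c} = {c \<in> {1..x}. A c} \<union> {c \<in> {x+1..x+y}. A c}" by auto
  then show ?thesis
    unfolding prefix_count_def by (simp add: card_Un_disjoint disjoint_iff)
qed

lemma prefix_count_Suc: "prefix_count A (Suc x) = prefix_count A x + (if A (Suc x) then 1 else 0)"
proof -
  have "{c. c = Suc x \<and> A c} = (if A (Suc x) then {Suc x} else {})" by auto
  then show ?thesis using prefix_count_add[of A x 1] by simp
qed

lemma prefix_count_le_used_count:
  assumes "valid_palette k P"
  shows "prefix_count (pA P) x \<le> used_count P"
proof -
  have "{c. pA P c} \<subseteq> {1..2^k}" using assms unfolding valid_palette_def by blast
  then have "finite {c. pA P c}" by (rule finite_subset) simp
  then show ?thesis unfolding prefix_count_def used_count_def by (rule card_mono) auto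
qed

lemma prefix_count_eq_used_count:
  assumes "valid_palette k P"
  shows "prefix_count (pA P) (2^k) = used_count P"
proof -
  have "{c \<in> {1..2^k}. pA P c} = {c. pA P c}" using assms unfolding valid_palette_def by auto
  then show ?thesis unfolding prefix_count_def used_count_def by simp
qed

lemma is_count_tree_node:
  assumes "is_count_tree k A T" "d \<le> k" "i < 2^d"
  shows "prefix_count A (i * 2^(k-d) + 2^(k-d)) = prefix_count A (i * 2^(k-d)) + T d i"
  using assms prefix_count_add[of A "i * 2^(k-d)" "2^(k-d)"]
  unfolding is_count_tree_def by (simp add: add.commute)

lemma deficient_block_split:
  assumes "deficient_block A B x (2 * m)"
  shows "prefix_count A (x + m) + prefix_count B (x + m) < prefix_count A x + prefix_count B x + m
           \<Longrightarrow> deficient_block A B x m"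
    and "\<not> prefix_count A (x + m) + prefix_count B (x + m) < prefix_count A x + prefix_count B x + m
           \<Longrightarrow> deficient_block A B (x + m) m"
  using assms unfolding deficient_block_def mult_2 add.assoc[symmetric] by linarith+

lemma deficient_leaf:
  assumes "deficient_block A B x 1"
  shows "\<not> A (x + 1)" "\<not> B (x + 1)" "x \<le> prefix_count A x + prefix_count B x"
  using assms prefix_count_Suc[of A x] prefix_count_Suc[of B x]
  unfolding deficient_block_def by (auto split: if_splits)

lemma cost_descend: "snd (descend r k T1 T2 d i) = 3 * r"
  by (induction r arbitrary: d i) (simp_all add: Let_def case_prod_beta)

lemma fst_descend_Suc:
  "fst (descend (Suc r) k T1 T2 d i) =
     fst (descend r k T1 T2 (Suc d)
       (if T1 (Suc d) (2*i) + T2 (Suc d) (2*i) < 2 ^ (k - Suc d) then 2*i else Suc (2*i)))"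
  by (simp add: Let_def split: prod.split)

lemma descend_deficient:
  assumes "is_count_tree k A T1" "is_count_tree k B T2"
    and "d + r = k" "i < 2^d" "deficient_block A B (i * 2^r) (2^r)"
  shows "deficient_block A B (fst (descend r k T1 T2 d i)) 1"
  using assms(3-)
proof (induction r arbitrary: d i)
  case 0
  then show ?case by simp
next
  case (Suc r)
  have r: "k - Suc d = r" and children: "2*i < 2^Suc d" "Suc (2*i) < 2^Suc d"
    using Suc.prems by auto
  have "prefix_count A (2*i * 2^r + 2^r) = prefix_count A (2*i * 2^r) + T1 (Suc d) (2*i)"
       "prefix_count B (2*i * 2^r + 2^r) = prefix_count B (2*i * 2^r) + T2 (Suc d) (2*i)"
    using is_count_tree_node[OF assms(1) _ children(1), unfolded r]
      is_count_tree_node[OF assms(2) _ children(1), unfolded r] Suc.prems by simp_all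
  moreover have "deficient_block A B (2*i * 2^r) (2 * 2^r)"
    using Suc.prems by (simp add: mult.assoc mult.left_commute)
  ultimately have "if T1 (Suc d) (2*i) + T2 (Suc d) (2*i) < 2^r
      then deficient_block A B (2*i * 2^r) (2^r) else deficient_block A B (Suc (2*i) * 2^r) (2^r)"
    using deficient_block_split[of A B "2*i * 2^r" "2^r"] by (simp add: add.commute)
  then show ?case
    unfolding fst_descend_Suc r using Suc.IH[of "Suc d"] Suc.prems children by auto
qed

lemma mem_block_iff_div:
  assumes "0 < (m::nat)" "1 \<le> c"
  shows "c \<in> {i*m+1..(i+1)*m} \<longleftrightarrow> i = (c-1) div m"
proof -
  have "c \<in> {i*m+1..(i+1)*m} \<longleftrightarrow> m * i \<le> c-1 \<and> c-1 < m * Suc i"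
    using assms(2) by (auto simp: algebra_simps)
  then show ?thesis
    using assms(1) div_nat_eqI[of m i "c-1"] div_times_less_eq_dividend[of "c-1" m]
      dividend_less_div_times[of m "c-1"] by (auto simp: mult.commute)
qed

lemma inc_path_eq:
  assumes "leaf < 2^k" "d \<le> k"
  shows "inc_path k leaf d T =
     ((\<lambda>d' i'. if d' \<le> d \<and> i' = leaf div 2^(k-d') then T d' i' + 1 else T d' i'), Suc d)"
  using assms by (induction d) (auto simp: fun_eq_iff Let_def)

lemma is_count_tree_insert:
  assumes tree: "is_count_tree k A T" and c: "c \<in> {1..2^k}" and "\<not> A c"
  shows "is_count_tree k (A(c := True))
           (\<lambda>d i. if d \<le> k \<and> i = (c-1) div 2^(k-d) then T d i + 1 else T d i)"
  unfolding is_count_tree_def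
proof (intro allI impI)
  fix d i :: nat
  assume "d \<le> k" "i < 2^d"
  let ?B = "{i * 2^(k-d) + 1 .. (i+1) * 2^(k-d)}"
  have old: "T d i = card {x \<in> ?B. A x}"
    using tree \<open>d \<le> k\<close> \<open>i < 2^d\<close> unfolding is_count_tree_def by blast
  have mem: "c \<in> ?B \<longleftrightarrow> i = (c-1) div 2^(k-d)"
    using mem_block_iff_div[of "2^(k-d)" c i] c by simp
  show "(if d \<le> k \<and> i = (c-1) div 2^(k-d) then T d i + 1 else T d i) =
        card {x \<in> ?B. (A(c := True)) x}"
  proof (cases "c \<in> ?B")
    case True
    then have "{x \<in> ?B. (A(c := True)) x} = insert c {x \<in> ?B. A x}" by auto
    then have "card {x \<in> ?B. (A(c := True)) x} = Suc (T d i)" using old \<open>\<not> A c\<close> by simp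
    moreover have "(if d \<le> k \<and> i = (c-1) div 2^(k-d) then T d i + 1 else T d i) = Suc (T d i)"
      using True mem \<open>d \<le> k\<close> by simp
    ultimately show ?thesis by simp
  next
    case False
    then have "{x \<in> ?B. (A(c := True)) x} = {x \<in> ?B. A x}" by auto
    moreover have "i \<noteq> (c-1) div 2^(k-d)" using False mem by blast
    ultimately show ?thesis using old by simp
  qed
qed

lemma mark_used_correct:
  assumes "valid_palette k P" "c \<in> {1..2^k}" "\<not> pA P c" "mark_used k P c e = (P', t)"
  shows "pA P' = (pA P)(c := True)" "pC P' = (pC P)(c := Some e)" "valid_palette k P'"
    "t = k + 3"
proof -
  let ?T = "\<lambda>d i. if d \<le> k \<and> i = (c-1) div 2^(k-d) then pT P d i + 1 else pT P d i"
  have "P' = P\<lparr>pA := (pA P)(c := True), pC := (pC P)(c := Some e), pT := ?T\<rparr>" "t = k + 3"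
    using assms(2,4) inc_path_eq[of "c-1" k k "pT P"] unfolding mark_used_def by auto
  moreover have "is_count_tree k ((pA P)(c := True)) ?T"
    using assms(1-3) is_count_tree_insert unfolding valid_palette_iff by blast
  ultimately show "pA P' = (pA P)(c := True)" "pC P' = (pC P)(c := Some e)" "valid_palette k P'"
    "t = k + 3"
    using assms(1,2) unfolding valid_palette_iff by auto
qed

lemma find_and_mark_correct:
  assumes P: "valid_palette k P" and Q: "valid_palette k Q"
    and room: "used_count P + used_count Q + 1 \<le> 2^k"
    and fm: "find_and_mark k P Q e = (c, P', Q', t)"
  shows "c \<in> {1..used_count P + used_count Q + 1}" "available k P c" "available k Q c"
    "pA P' = (pA P)(c := True)" "pC P' = (pC P)(c := Some e)" "valid_palette k P'"
    "pA Q' = (pA Q)(c := True)" "pC Q' = (pC Q)(c := Some e)" "valid_palette k Q'"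
    "t = 5 * k + 7"
proof -
  define j where "j = fst (descend k k (pT P) (pT Q) 0 0)"
  obtain tP tQ where mP: "mark_used k P (j+1) e = (P', tP)" and mQ: "mark_used k Q (j+1) e = (Q', tQ)"
    and c: "c = j + 1" and t: "t = 3 * k + tP + tQ + 1"
    using fm cost_descend[of k k "pT P" "pT Q" 0 0] unfolding find_and_mark_def j_def
    by (auto simp: Let_def split: prod.splits)
  have "deficient_block (pA P) (pA Q) 0 (2^k)"
    using room prefix_count_eq_used_count[OF P] prefix_count_eq_used_count[OF Q]
    unfolding deficient_block_def by simp
  then have "deficient_block (pA P) (pA Q) j 1"
    using descend_deficient P Q unfolding j_def valid_palette_iff by fastforce
  note leaf = deficient_leaf[OF this]
  have "j \<le> used_count P + used_count Q"
    using leaf(3) prefix_count_le_used_count[OF P] prefix_count_le_used_count[OF Q]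
    by (meson add_mono le_trans)
  then have "c \<in> {1..used_count P + used_count Q + 1}" and "c \<in> {1..2^k}"
    using room c by auto
  then show "c \<in> {1..used_count P + used_count Q + 1}" "available k P c" "available k Q c"
    using leaf c unfolding available_def by auto
  show "pA P' = (pA P)(c := True)" "pC P' = (pC P)(c := Some e)" "valid_palette k P'"
    "pA Q' = (pA Q)(c := True)" "pC Q' = (pC Q)(c := Some e)" "valid_palette k Q'"
    "t = 5 * k + 7"
    using mark_used_correct[OF P \<open>c \<in> {1..2^k}\<close> _ mP[folded c]]
      mark_used_correct[OF Q \<open>c \<in> {1..2^k}\<close> _ mQ[folded c]] leaf c t by simp_all
qed

lemma pal_k_le_log:
  assumes "\<Delta> \<ge> 1"
  shows "real (pal_k \<Delta>) \<le> log 2 (real \<Delta>) + 2"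
proof -
  have "log 2 (2 * real \<Delta> - 1) \<le> log 2 (2 * real \<Delta>)" using assms by simp
  also have "\<dots> = 1 + log 2 (real \<Delta>)" using assms by (simp add: log_mult)
  finally have "log 2 (2 * real \<Delta> - 1) \<le> 1 + log 2 (real \<Delta>)" .
  moreover have "log 2 (2 * real \<Delta> - 1) \<ge> 0" using assms by simp
  ultimately show ?thesis unfolding pal_k_def by linarith
qed

theorem theorem1:
  shows "\<exists>Cst::real. \<forall>(\<Delta>::nat) (P::'e palette) (Q::'e palette) (a::nat) (b::nat) (e::'e)
            c P' Q' t.
     \<Delta> \<ge> 1 \<and> valid_palette (pal_k \<Delta>) P \<and> valid_palette (pal_k \<Delta>) Q \<and>
     used_count P = a \<and> used_count Q = b \<and> a + b + 1 \<le> pal_N \<Delta> \<and>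
     find_and_mark (pal_k \<Delta>) P Q e = (c, P', Q', t)
     \<longrightarrow> c \<in> {1..a+b+1} \<and>
         available (pal_k \<Delta>) P c \<and> available (pal_k \<Delta>) Q c \<and>
         pA P' = (pA P)(c := True) \<and> pC P' = (pC P)(c := Some e) \<and>
         valid_palette (pal_k \<Delta>) P' \<and>
         pA Q' = (pA Q)(c := True) \<and> pC Q' = (pC Q)(c := Some e) \<and>
         valid_palette (pal_k \<Delta>) Q' \<and>
         real t \<le> Cst * (1 + log 2 (real \<Delta>))"
proof (rule exI[of _ 17], intro allI impI, elim conjE)
  fix \<Delta> :: nat and P Q :: "'e palette" and a b :: nat and e :: 'e and c P' Q' t
  assume "\<Delta> \<ge> 1" "valid_palette (pal_k \<Delta>) P" "valid_palette (pal_k \<Delta>) Q"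
    "used_count P = a" "used_count Q = b" "a + b + 1 \<le> pal_N \<Delta>"
    "find_and_mark (pal_k \<Delta>) P Q e = (c, P', Q', t)"
  note correct = find_and_mark_correct[OF this(2,3) _ this(7)]
  have "log 2 (real \<Delta>) \<ge> 0" using \<open>\<Delta> \<ge> 1\<close> by simp
  then have "real t \<le> 17 * (1 + log 2 (real \<Delta>))"
    using correct(10) pal_k_le_log[OF \<open>\<Delta> \<ge> 1\<close>] \<open>a + b + 1 \<le> pal_N \<Delta>\<close>
      \<open>used_count P = a\<close> \<open>used_count Q = b\<close> unfolding pal_N_def by simp
  then show "c \<in> {1..a+b+1} \<and>
         available (pal_k \<Delta>) P c \<and> available (pal_k \<Delta>) Q c \<and>
         pA P' = (pA P)(c := True) \<and> pC P' = (pC P)(c := Some e) \<and>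
         valid_palette (pal_k \<Delta>) P' \<and>
         pA Q' = (pA Q)(c := True) \<and> pC Q' = (pC Q)(c := Some e) \<and>
         valid_palette (pal_k \<Delta>) Q' \<and>
         real t \<le> 17 * (1 + log 2 (real \<Delta>))"
    using correct \<open>a + b + 1 \<le> pal_N \<Delta>\<close> \<open>used_count P = a\<close> \<open>used_count Q = b\<close>
    unfolding pal_N_def by simp
qed

end
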